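(* Under Assumptions (A1)–(A4), for every $\delta>0$ and all $n\ge N(d,t_0,\tilde\theta,\delta_0,\eta_0)$, $$\widetilde J_B(\delta,\mathcal G_n(\delta),\mathbb P)\le\frac{3^{(5+d)/2}\sqrt d\,(\log(nd))^{1+d/2}\,\delta}{(\log(1/t_0))^{1+d/2}}.$$
   Context: Let $b_k>0$ for all $k\in\mathbb N=\{0,1,2,\dots\}$, $b(\theta)=\sum_{k\ge0}b_k\theta^k$ with radius of convergence $R\in(0,\infty]$, $\mathcal T=[0,R]$ if $b(R)<\infty$ and $\mathcal T=[0,R)$ if $b(R)=\infty$, $f_\theta(k)=b_k\theta^k/b(\theta)$. Fix $d\ge1$, $\Theta=\mathcal T^d$; $\mathcal M$ is the set of pmfs $\pi(\mathbf k)=\int_\Theta\prod_{j=1}^d f_{\theta_j}(k_j)\,dQ(\boldsymbol\theta)$ on $\mathbb N^d$ with $Q$ any probability measure on $\Theta$; $\pi_0\in\mathcal M$ corresponds to $Q_0$, and $\mathbb P$ is the probability measure on $\mathbb N^d$ with pmf $\pi_0$. Hellinger distance: $h^2(\pi_1,\pi_2)=\frac12\sum_{\mathbf k}(\sqrt{\pi_1(\mathbf k)}-\sqrt{\pi_2(\mathbf k)})^2$. Let $K_n=\min\{K\in\mathbb N:\sum_{\mathbf k:\max_{j}k_j>K}\pi_0(\mathbf k)\le(\log(nd))^{2+d}/n\}$ and $\mathcal G_n(\delta)=\Big\{\mathbf k\mapsto\frac{\pi(\mathbf k)-\pi_0(\mathbf k)}{\pi(\mathbf k)+\pi_0(\mathbf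 k)}\mathbb I\{\max_{1\le j\le d}k_j\le K_n\}:\ \pi\in\mathcal M,\ h(\pi,\pi_0)\le\delta\Big\}$. For $\nu>0$, $H_B(\nu,\mathcal G,\mathbb P)$ is the logarithm of the smallest number of pairs of functions $(L,U)$ with $L\le U$ and $\int(U-L)^2d\mathbb P\le\nu^2$ needed so that every $g\in\mathcal G$ satisfies $L\le g\le U$ for one of the pairs; $\widetilde J_B(\delta,\mathcal G,\mathbb P)=\int_0^\delta\sqrt{1+H_B(u,\mathcal G,\mathbb P)}\,du$. Assumptions: (A1) If $R<\infty$, there is $q_0\in(0,1)$ with $\mathrm{supp}\,Q_0\subseteq[0,q_0R]^d$; if $R=\infty$, there is $M>0$ with $\mathrm{supp}\,Q_0\subseteq[0,M]^d$. (A2) If $Q_0(\{(0,\dots,0)\})>0$, there exist $\eta_0\in(0,1)$, $\delta_0\in(0,R)$ with $Q_0(\{(0,\dots,0)\})\le1-\eta_0$ and $\mathrm{supp}\,Q_0\cap\bigcup_{j}\{\boldsymbol\theta:\theta_j\in(0,\delta_0)\}=\varnothing$; if $Q_0(\{(0,\dots,0)\})=0$, there is $\delta_0\in(0,R)$ with the same support condition (then $\eta_0$ denotes an arbitrary fixed number in $(0,1]$). (A3) There is $V\in\mathbb N$ with $b_k/b_0\ge k^{-k}$ for $k\ge V$. (A4) $\lim_{k\to\infty}b_{k+1}/b_k$ exists in $[0,\infty)$. Constants: $t_0=\frac{q_0+1}{2}$, $\tilde\theta=q_0R$ if $R<\infty$; $t_0=\frac12$, $\tilde\theta=M$ if $R=\infty$.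 $U=\lfloor\tilde\theta\sup_{\theta\in(0,\tilde\theta)}b'(\theta)/b(\theta)\rfloor+1$, $W=\min\{w\ge3:\sup_{k\ge w}b_{k+1}/b_k\le t_0/\tilde\theta\}$, $N(d,t_0,\tilde\theta,\delta_0,\eta_0)=\Big\lfloor\frac1d\exp\Big\{\log\big(\tfrac{1}{\sqrt{t_0}}\big)\Big(U\vee V\vee W\vee\frac{b(\delta_0)}{b_0\eta_0^{1/d}}\vee\frac{1}{\delta_0^{1/d}}\Big)\Big\}\vee\frac{1}{t_0^{W-1}(1-t_0)}\Big\rfloor+1.$ *)

theory Defs
  imports "HOL-Analysis.Analysis" "HOL-Probability.Probability"
begin

definition bser :: "(nat \<Rightarrow> real) \<Rightarrow> real \<Rightarrow> real" where
  "bser b \<theta> = (\<Sum>k. b k * \<theta> ^ k)"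

definition Rad :: "(nat \<Rightarrow> real) \<Rightarrow> ereal" where
  "Rad b = conv_radius b"

definition Tset :: "(nat \<Rightarrow> real) \<Rightarrow> real set" where
  "Tset b = (if Rad b = \<infinity> then {0..}
             else if summable (\<lambda>k. b k * real_of_ereal (Rad b) ^ k)
                  then {0..real_of_ereal (Rad b)}
                  else {0..<real_of_ereal (Rad b)})"

definition fdens :: "(nat \<Rightarrow> real) \<Rightarrow> real \<Rightarrow> nat \<Rightarrow> real" where
  "fdens b \<theta> k = b k * \<theta> ^ k / bser b \<theta>"

definition Theta :: "(nat \<Rightarrow> real) \<Rightarrow> (real ^ 'd) set" where
  "Theta b = {\<theta>. \<forall>j. \<theta> $ j \<in> Tset b}"

definition valid_mixing :: "(nat \<Rightarrow> real) \<Rightarrow> (real ^ 'd) measure \<Rightarrow> bool" where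
  "valid_mixing b Q \<longleftrightarrow> prob_space Q \<and> sets Q = sets (borel :: (real ^ 'd) measure)
      \<and> emeasure Q (Theta b) = 1"

definition mixpmf :: "(nat \<Rightarrow> real) \<Rightarrow> (real ^ 'd) measure \<Rightarrow> nat ^ 'd \<Rightarrow> real" where
  "mixpmf b Q = (\<lambda>k. \<integral>\<theta>. (\<Prod>j\<in>UNIV. fdens b (\<theta> $ j) (k $ j)) \<partial>Q)"

definition Mset :: "(nat \<Rightarrow> real) \<Rightarrow> (nat ^ 'd \<Rightarrow> real) set" where
  "Mset b = {mixpmf b Q | Q. valid_mixing b Q}"

definition msupp :: "'a::topological_space measure \<Rightarrow> 'a set" where
  "msupp Q = {x. \<forall>U. open U \<and> x \<in> U \<longrightarrow> emeasure Q U > 0}"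

definition hell :: "('a \<Rightarrow> real) \<Rightarrow> ('a \<Rightarrow> real) \<Rightarrow> real" where
  "hell p q = sqrt ((1/2) * infsum (\<lambda>k. (sqrt (p k) - sqrt (q k))^2) UNIV)"

definition maxk :: "nat ^ 'd \<Rightarrow> nat" where
  "maxk k = Max (range (\<lambda>j. k $ j))"

definition Kn :: "(nat ^ 'd \<Rightarrow> real) \<Rightarrow> nat \<Rightarrow> nat" where
  "Kn p0 n = (LEAST K::nat. infsum p0 {k. maxk k > K}
       \<le> (ln (real (n * CARD('d)))) ^ (2 + CARD('d)) / real n)"

definition Gn :: "(nat \<Rightarrow> real) \<Rightarrow> (nat ^ 'd \<Rightarrow> real) \<Rightarrow> nat \<Rightarrow> real
                  \<Rightarrow> (nat ^ 'd \<Rightarrow> real) set" where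
  "Gn b p0 n \<delta> = {(\<lambda>k. (p k - p0 k) / (p k + p0 k) * (if maxk k \<le> Kn p0 n then 1 else 0))
                   | p. p \<in> Mset b \<and> hell p p0 \<le> \<delta>}"

definition Pmeas :: "(nat ^ 'd \<Rightarrow> real) \<Rightarrow> (nat ^ 'd) measure" where
  "Pmeas p0 = density (count_space UNIV) (\<lambda>k. ennreal (p0 k))"

definition bracket_cover :: "'a measure \<Rightarrow> ('a \<Rightarrow> real) set \<Rightarrow> real
      \<Rightarrow> (('a \<Rightarrow> real) \<times> ('a \<Rightarrow> real)) set \<Rightarrow> bool" where
  "bracket_cover P G \<nu> F \<longleftrightarrow> finite F
     \<and> (\<forall>(L, U) \<in> F. (\<forall>x. L x \<le> U x)
            \<and> (\<integral>\<^sup>+ x. ennreal ((U x - L x)^2) \<partial>P) \<le> ennreal (\<nu>^2))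
     \<and> (\<forall>g\<in>G. \<exists>(L, U) \<in> F. \<forall>x. L x \<le> g x \<and> g x \<le> U x)"

text \<open>Bracketing number (infinity if no finite cover exists).\<close>
definition brack_num :: "'a measure \<Rightarrow> ('a \<Rightarrow> real) set \<Rightarrow> real \<Rightarrow> enat" where
  "brack_num P G \<nu> = (INF F \<in> {F. bracket_cover P G \<nu> F}. enat (card F))"

definition HB :: "'a measure \<Rightarrow> ('a \<Rightarrow> real) set \<Rightarrow> real \<Rightarrow> ereal" where
  "HB P G \<nu> = (case brack_num P G \<nu> of enat m \<Rightarrow> ereal (ln (real m)) | \<infinity> \<Rightarrow> \<infinity>)"

definition JB :: "'a measure \<Rightarrow> ('a \<Rightarrow> real) set \<Rightarrow> real \<Rightarrow> ennreal" where
  "JB P G \<delta> = (\<integral>\<^sup>+ u \<in> {0..\<delta>}.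
       (case HB P G u of ereal x \<Rightarrow> ennreal (sqrt (1 + x)) | _ \<Rightarrow> \<infinity>) \<partial>lborel)"

definition t0c :: "(nat \<Rightarrow> real) \<Rightarrow> real \<Rightarrow> real" where
  "t0c b q0 = (if Rad b = \<infinity> then 1/2 else (q0 + 1) / 2)"

definition thetac :: "(nat \<Rightarrow> real) \<Rightarrow> real \<Rightarrow> real \<Rightarrow> real" where
  "thetac b q0 M = (if Rad b = \<infinity> then M else q0 * real_of_ereal (Rad b))"

definition Uc :: "(nat \<Rightarrow> real) \<Rightarrow> real \<Rightarrow> real" where
  "Uc b th = real_of_int \<lfloor>th * (SUP \<theta>\<in>{0<..<th}. deriv (bser b) \<theta> / bser b \<theta>)\<rfloor> + 1"

definition Wc :: "(nat \<Rightarrow> real) \<Rightarrow> real \<Rightarrow> real \<Rightarrow> nat" where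
  "Wc b t0 th = (LEAST w::nat. 3 \<le> w \<and> (SUP k\<in>{w..}. b (Suc k) / b k) \<le> t0 / th)"

definition Nc :: "(nat \<Rightarrow> real) \<Rightarrow> nat \<Rightarrow> real \<Rightarrow> real \<Rightarrow> real \<Rightarrow> real \<Rightarrow> nat \<Rightarrow> nat" where
  "Nc b d t0 th \<delta>0 \<eta>0 V =
     nat \<lfloor>max ((1 / real d) * exp (ln (1 / sqrt t0) *
              max (max (max (max (Uc b th) (real V)) (real (Wc b t0 th)))
                        (bser b \<delta>0 / (b 0 * \<eta>0 powr (1 / real d))))
                  (1 / \<delta>0 powr (1 / real d))))
            (1 / (t0 ^ (Wc b t0 th - 1) * (1 - t0)))\<rfloor> + 1"

end

theory Submission
  imports Defs
begin

(* Every g in G_n(delta) vanishes outside the box {k. max_j k_j <= K_n} and satisfies |g| <= 1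
   and sqrt(pi0) |g| <= 2 delta, because the Hellinger distance bounds |sqrt pi - sqrt pi0|
   pointwise by sqrt 2 delta.  Cutting this envelope into N equal cells at each of the
   m = (K_n + 1)^d points of the box gives N^m brackets of L2(P)-size 4 sqrt m delta / N, so
   H_B(u) <= m log ceil(4 sqrt m delta / u) and integration gives
   J_B <= (sqrt (1 + m log (4 sqrt m + 1)) + 2 sqrt m) delta.
   By (A1) and (A4) the ratios b_(k+1)/b_k are at most t0/theta~ beyond W, so the tails of pi0
   beyond level K are at most d t0^(K+1-W); this forces K_n + 1 <= 3 log(nd)/log(1/t0) once
   n >= 1/(t0^(W-1) (1 - t0)), the only part of N(d, ...) that is needed. *)

section \<open>Boxes of lattice points\<close>

lemma bij_betw_vec_lambda_PiE:
  "bij_betw vec_lambda (PiE UNIV A) {x::'a^'n. \<forall>i. x $ i \<in> A i}"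
  by (rule bij_betwI[where g = vec_nth]) auto

lemma finite_vec_box:
  assumes "\<And>i. finite (A i)"
  shows "finite {x::'a^'n::finite. \<forall>i. x $ i \<in> A i}"
  using bij_betw_finite[OF bij_betw_vec_lambda_PiE[of A]] assms by (simp add: finite_PiE)

lemma card_vec_box: "card {x::'a^'n::finite. \<forall>i. x $ i \<in> A i} = (\<Prod>i\<in>UNIV. card (A i))"
  using bij_betw_same_card[OF bij_betw_vec_lambda_PiE[of A]] by (simp add: card_PiE)

lemma sum_prod_vec_box:
  fixes g :: "'n::finite \<Rightarrow> 'a \<Rightarrow> 'b::comm_semiring_1"
  assumes "\<And>i. finite (A i)"
  shows "(\<Sum>x\<in>{x::'a^'n. \<forall>i. x $ i \<in> A i}. \<Prod>i\<in>UNIV. g i (x $ i)) = (\<Prod>i\<in>UNIV. \<Sum>y\<in>A i. g i y)"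
proof -
  have "(\<Prod>i\<in>UNIV. \<Sum>y\<in>A i. g i y) = (\<Sum>p\<in>PiE UNIV A. \<Prod>i\<in>UNIV. g i (p i))"
    by (rule prod_sum_PiE) (auto simp: assms)
  also have "\<dots> = (\<Sum>x\<in>{x::'a^'n. \<forall>i. x $ i \<in> A i}. \<Prod>i\<in>UNIV. g i (x $ i))"
    using sum.reindex_bij_betw[OF bij_betw_vec_lambda_PiE, of "\<lambda>x. \<Prod>i\<in>UNIV. g i (x $ i)"] by simp
  finally show ?thesis by simp
qed

lemma finite_subset_vec_box_atMost:
  fixes F :: "(nat^'n::finite) set"
  assumes "finite F"
  obtains N where "F \<subseteq> {x. \<forall>i. x $ i \<in> {..N}}"
  by (rule that[of "Max (\<Union>x\<in>F. range (vec_nth x))"]) (use assms in \<open>auto intro!: Max_ge\<close>)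

lemma sum_prod_le_1:
  fixes f :: "'n::finite \<Rightarrow> nat \<Rightarrow> real"
  assumes nonneg: "\<And>i y. 0 \<le> f i y" and le_1: "\<And>i N. (\<Sum>y\<le>N. f i y) \<le> 1"
    and "finite F"
  shows "(\<Sum>x\<in>F. \<Prod>i\<in>UNIV. f i (x $ i)) \<le> 1"
proof -
  obtain N where N: "F \<subseteq> {x. \<forall>i. x $ i \<in> {..N}}"
    using finite_subset_vec_box_atMost[OF \<open>finite F\<close>] .
  have "(\<Sum>x\<in>F. \<Prod>i\<in>UNIV. f i (x $ i)) \<le> (\<Sum>x\<in>{x. \<forall>i. x $ i \<in> {..N}}. \<Prod>i\<in>UNIV. f i (x $ i))"
    by (rule sum_mono2[OF finite_vec_box N]) (auto intro!: prod_nonneg nonneg)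
  also have "\<dots> = (\<Prod>i\<in>UNIV. \<Sum>y\<le>N. f i y)"
    by (rule sum_prod_vec_box) simp
  also have "\<dots> \<le> 1"
    by (rule prod_le_1) (auto intro!: sum_nonneg nonneg le_1)
  finally show ?thesis .
qed

lemma sum_prod_tail_le:
  fixes f :: "'n::finite \<Rightarrow> nat \<Rightarrow> real" and \<tau> :: real
  assumes nonneg: "\<And>i y. 0 \<le> f i y" and le_1: "\<And>i N. (\<Sum>y\<le>N. f i y) \<le> 1"
    and tail: "\<And>i N. (\<Sum>y\<in>{K<..N}. f i y) \<le> \<tau>"
    and F: "finite F" "F \<subseteq> {x. \<exists>i. K < x $ i}"
  shows "(\<Sum>x\<in>F. \<Prod>i\<in>UNIV. f i (x $ i)) \<le> real CARD('n) * \<tau>"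
proof -
  obtain N where N: "F \<subseteq> {x. \<forall>i. x $ i \<in> {..N}}"
    using finite_subset_vec_box_atMost[OF F(1)] .
  define \<phi> where "\<phi> x = (\<Prod>i\<in>UNIV. f i (x $ i))" for x :: "nat^'n"
  have \<phi>_nonneg: "0 \<le> \<phi> x" for x
    unfolding \<phi>_def by (auto intro!: prod_nonneg nonneg)
  have tail_i: "(\<Sum>x\<in>F \<inter> {x. K < x $ i}. \<phi> x) \<le> \<tau>" for i
  proof -
    define A where "A l = (if l = i then {K<..N} else {..N})" for l
    have "(\<Sum>x\<in>F \<inter> {x. K < x $ i}. \<phi> x) \<le> (\<Sum>x\<in>{x. \<forall>l. x $ l \<in> A l}. \<phi> x)"
      by (rule sum_mono2[OF finite_vec_box]) (use N in \<open>auto simp: A_def \<phi>_nonneg\<close>)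
    also have "\<dots> = (\<Prod>l\<in>UNIV. \<Sum>y\<in>A l. f l y)"
      unfolding \<phi>_def by (rule sum_prod_vec_box) (simp add: A_def)
    also have "\<dots> = (\<Sum>y\<in>A i. f i y) * (\<Prod>l\<in>UNIV-{i}. \<Sum>y\<in>A l. f l y)"
      by (rule prod.remove) auto
    also have "\<dots> \<le> \<tau> * 1"
      by (intro mult_mono prod_le_1 prod_nonneg conjI sum_nonneg)
        (auto simp: A_def tail le_1 nonneg intro!: order.trans[OF sum_nonneg tail])
    finally show ?thesis by simp
  qed
  have "(\<Sum>x\<in>F. \<phi> x) \<le> (\<Sum>x\<in>F. \<Sum>i\<in>UNIV. if K < x $ i then \<phi> x else 0)"
  proof (rule sum_mono)
    fix x assume "x \<in> F"
    then obtain i where "K < x $ i" using F(2) by blast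
    then show "\<phi> x \<le> (\<Sum>i\<in>UNIV. if K < x $ i then \<phi> x else 0)"
      using member_le_sum[of i UNIV "\<lambda>i. if K < x $ i then \<phi> x else 0"] by (simp add: \<phi>_nonneg)
  qed
  also have "\<dots> = (\<Sum>i\<in>UNIV. \<Sum>x\<in>F \<inter> {x. K < x $ i}. \<phi> x)"
    by (subst sum.swap) (simp add: sum.inter_restrict[OF F(1)])
  also have "\<dots> \<le> real CARD('n) * \<tau>"
    using sum_mono[of UNIV "\<lambda>i. \<Sum>x\<in>F \<inter> {x. K < x $ i}. \<phi> x" "\<lambda>_. \<tau>"] tail_i by simp
  finally show ?thesis unfolding \<phi>_def .
qed

section \<open>The power-series family\<close>

lemma Tset_nonneg: "\<theta> \<in> Tset b \<Longrightarrow> 0 \<le> \<theta>"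
  by (auto simp: Tset_def split: if_splits)

lemma Tset_summable:
  assumes "\<theta> \<in> Tset b"
  shows "summable (\<lambda>k. b k * \<theta> ^ k)"
proof -
  have "ereal \<theta> < Rad b \<or> summable (\<lambda>k. b k * \<theta> ^ k)"
  proof (cases "Rad b")
    case (real R)
    then show ?thesis using assms by (cases "\<theta> = R") (auto simp: Tset_def split: if_splits)
  next
    case MInf
    then show ?thesis using conv_radius_nonneg[of b] by (simp add: Rad_def)
  qed (simp add: Tset_def)
  then show ?thesis
    using Tset_nonneg[OF assms] by (auto simp: Rad_def intro: summable_in_conv_radius)
qed

lemma sum_lessThan_le_bser:
  assumes "\<forall>k. b k > 0" and "\<theta> \<in> Tset b"
  shows "(\<Sum>k<n. b k * \<theta> ^ k) \<le> bser b \<theta>"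
  unfolding bser_def using assms Tset_nonneg[OF assms(2)]
  by (intro sum_le_suminf Tset_summable) (auto intro!: mult_nonneg_nonneg simp: less_imp_le)

lemma bser_pos:
  assumes "\<forall>k. b k > 0" and "\<theta> \<in> Tset b"
  shows "0 < bser b \<theta>"
  using sum_lessThan_le_bser[OF assms, of 1] assms(1) by (auto intro: less_le_trans)

lemma fdens_nonneg:
  assumes "\<forall>k. b k > 0" and "\<theta> \<in> Tset b"
  shows "0 \<le> fdens b \<theta> k"
  using assms bser_pos[OF assms] Tset_nonneg[OF assms(2)] by (simp add: fdens_def less_imp_le)

lemma sum_fdens_le_1:
  assumes "\<forall>k. b k > 0" and "\<theta> \<in> Tset b"
  shows "(\<Sum>k\<le>N. fdens b \<theta> k) \<le> 1"
proof -
  have "(\<Sum>k\<le>N. fdens b \<theta> k) = (\<Sum>k<Suc N. b k * \<theta> ^ k) / bser b \<theta>"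
    unfolding fdens_def by (simp add: sum_divide_distrib lessThan_Suc_atMost)
  also have "\<dots> \<le> 1"
    using sum_lessThan_le_bser[OF assms, of "Suc N"] bser_pos[OF assms] by (simp del: sum.lessThan_Suc)
  finally show ?thesis .
qed

section \<open>Mixtures and their tails\<close>

lemma sum_integral_le_AE:
  fixes \<phi> :: "'k \<Rightarrow> 'a \<Rightarrow> real"
  assumes "prob_space Q" and "finite F"
    and AE: "AE \<theta> in Q. (\<forall>k. 0 \<le> \<phi> k \<theta>) \<and> (\<Sum>k\<in>F. \<phi> k \<theta>) \<le> c"
  shows "(\<Sum>k\<in>F. \<integral>\<theta>. \<phi> k \<theta> \<partial>Q) \<le> c"
proof -
  interpret prob_space Q by fact
  \<comment> \<open>non-integrable summands have Bochner integral 0 and can be dropped\<close>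
  define F' where "F' = {k\<in>F. integrable Q (\<phi> k)}"
  have "(\<Sum>k\<in>F. \<integral>\<theta>. \<phi> k \<theta> \<partial>Q) = (\<Sum>k\<in>F'. \<integral>\<theta>. \<phi> k \<theta> \<partial>Q)"
    using \<open>finite F\<close> unfolding F'_def
    by (intro sum.mono_neutral_right) (auto simp: not_integrable_integral_eq)
  also have "\<dots> = (\<integral>\<theta>. (\<Sum>k\<in>F'. \<phi> k \<theta>) \<partial>Q)"
    by (subst Bochner_Integration.integral_sum) (auto simp: F'_def)
  also have "\<dots> \<le> (\<integral>\<theta>. c \<partial>Q)"
  proof (rule integral_mono_AE')
    show "AE \<theta> in Q. (\<Sum>k\<in>F'. \<phi> k \<theta>) \<le> c"
      using AE by eventually_elim
        (use \<open>finite F\<close> in \<open>auto simp: F'_def intro: order.trans[OF sum_mono2]\<close>)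
    show "AE \<theta> in Q. 0 \<le> c"
      using AE by eventually_elim (auto intro: order.trans[OF sum_nonneg])
  qed simp
  also have "\<dots> = c" by (simp add: prob_space)
  finally show ?thesis .
qed

lemma AE_Theta:
  assumes "valid_mixing b Q"
  shows "AE \<theta> in Q. \<theta> \<in> Theta b"
proof -
  interpret prob_space Q using assms by (simp add: valid_mixing_def)
  show ?thesis
    using assms by (intro AE_prob_1) (simp add: valid_mixing_def measure_def)
qed

lemma mixpmf_nonneg:
  assumes "\<forall>k. b k > 0" and "valid_mixing b Q"
  shows "0 \<le> mixpmf b Q k"
  unfolding mixpmf_def using AE_Theta[OF assms(2)]
  by (intro integral_nonneg_AE, eventually_elim)
     (auto intro!: prod_nonneg fdens_nonneg assms(1) simp: Theta_def)

lemma sum_mixpmf_le_1: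
  fixes Q :: "(real^'d::finite) measure"
  assumes "\<forall>k. b k > 0" and "valid_mixing b Q" and "finite F"
  shows "(\<Sum>k\<in>F. mixpmf b Q k) \<le> 1"
  unfolding mixpmf_def
proof (rule sum_integral_le_AE[OF _ \<open>finite F\<close>])
  show "prob_space Q" using assms by (simp add: valid_mixing_def)
  show "AE \<theta> in Q. (\<forall>k. 0 \<le> (\<Prod>j\<in>UNIV. fdens b (\<theta> $ j) (k $ j))) \<and>
        (\<Sum>k\<in>F. \<Prod>j\<in>UNIV. fdens b (\<theta> $ j) (k $ j)) \<le> 1"
    using AE_Theta[OF assms(2)] by eventually_elim
      (auto intro!: prod_nonneg sum_prod_le_1 fdens_nonneg sum_fdens_le_1 assms simp: Theta_def)
qed

lemma mixpmf_summable_on: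
  fixes Q :: "(real^'d::finite) measure"
  assumes "\<forall>k. b k > 0" and "valid_mixing b Q"
  shows "mixpmf b Q summable_on A"
  using mixpmf_nonneg[OF assms] sum_mixpmf_le_1[OF assms]
  by (intro nonneg_bdd_above_summable_on bdd_aboveI) auto

lemma AE_msupp_subset:
  fixes Q :: "'a::second_countable_topology measure"
  assumes sets: "sets Q = sets borel" and sub: "msupp Q \<subseteq> B"
  shows "AE x in Q. x \<in> B"
proof -
  define \<F> where "\<F> = {U. open U \<and> emeasure Q U = 0}"
  obtain \<F>' where F': "\<F>' \<subseteq> \<F>" "countable \<F>'" "\<Union>\<F>' = \<Union>\<F>"
    using Lindelof[of \<F>] unfolding \<F>_def by blast
  have "(\<Union>U\<in>\<F>'. U) \<in> null_sets Q"
    using F'(1) sets by (intro null_sets_UN'[OF F'(2)]) (auto simp: \<F>_def null_sets_def)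
  moreover have "{x \<in> space Q. x \<notin> B} \<subseteq> \<Union>\<F>'"
  proof
    fix x assume "x \<in> {x \<in> space Q. x \<notin> B}"
    then have "x \<notin> msupp Q" using sub by blast
    then obtain U where "open U" "x \<in> U" "emeasure Q U = 0"
      by (auto simp: msupp_def not_gr_zero)
    then show "x \<in> \<Union>\<F>'" using F'(3) by (auto simp: \<F>_def)
  qed
  ultimately show ?thesis using AE_I'[of "\<Union>\<F>'" Q "\<lambda>x. x \<in> B"] by simp
qed

lemma fdens_shift_le:
  assumes bpos: "\<forall>k. b k > 0" and \<theta>: "\<theta> \<in> Tset b" "\<theta> \<le> th" and "0 < th" "0 \<le> t0"
    and "\<And>k. W \<le> k \<Longrightarrow> b (Suc k) / b k \<le> t0 / th" and "W \<le> k"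
  shows "fdens b \<theta> (k + j) \<le> t0 ^ j * fdens b \<theta> k"
proof (induction j)
  case (Suc j)
  have "fdens b \<theta> (k + Suc j) = b (Suc (k + j)) / b (k + j) * \<theta> * fdens b \<theta> (k + j)"
    using bpos[rule_format, of "k + j"] by (simp add: fdens_def field_simps)
  also have "\<dots> \<le> t0 / th * th * fdens b \<theta> (k + j)"
    using assms Tset_nonneg[OF \<theta>(1)] fdens_nonneg[OF bpos \<theta>(1)]
    by (intro mult_right_mono mult_mono) (auto intro!: divide_nonneg_nonneg less_imp_le)
  also have "\<dots> \<le> t0 * (t0 ^ j * fdens b \<theta> k)"
    using Suc \<open>0 < th\<close> \<open>0 \<le> t0\<close> by (simp add: mult_left_mono)
  finally show ?case by (simp add: mult.assoc)
qed simp

lemma fdens_tail_le: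
  assumes bpos: "\<forall>k. b k > 0" and \<theta>: "\<theta> \<in> Tset b" "\<theta> \<le> th" and "0 < th" "0 \<le> t0"
    and "\<And>k. W \<le> k \<Longrightarrow> b (Suc k) / b k \<le> t0 / th" and "W \<le> K + 1"
  shows "(\<Sum>k\<in>{K<..N}. fdens b \<theta> k) \<le> t0 ^ (K + 1 - W)"
proof (cases "K < N")
  case True
  define s where "s = K + 1 - W"
  have "{K<..N} = {W + s..N - s + s}" using True \<open>W \<le> K + 1\<close> by (auto simp: s_def)
  then have "(\<Sum>k\<in>{K<..N}. fdens b \<theta> k) = (\<Sum>k\<in>{W..N - s}. fdens b \<theta> (k + s))"
    by (simp only: sum.shift_bounds_cl_nat_ivl)
  also have "\<dots> \<le> (\<Sum>k\<in>{W..N - s}. t0 ^ s * fdens b \<theta> k)"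
    using fdens_shift_le[OF assms(1-6)] by (intro sum_mono) auto
  also have "\<dots> \<le> t0 ^ s * (\<Sum>k\<le>N - s. fdens b \<theta> k)"
    unfolding sum_distrib_left[symmetric] using \<open>0 \<le> t0\<close> fdens_nonneg[OF bpos \<theta>(1)]
    by (intro mult_left_mono sum_mono2) auto
  also have "\<dots> \<le> t0 ^ s"
    using sum_fdens_le_1[OF bpos \<theta>(1)] \<open>0 \<le> t0\<close> by (simp add: mult_left_le)
  finally show ?thesis by (simp add: s_def)
qed (use \<open>0 \<le> t0\<close> in simp)

lemma maxk_gt_iff: "K < maxk x \<longleftrightarrow> (\<exists>i. K < x $ i)"
  unfolding maxk_def by (subst Max_gr_iff) auto

lemma maxk_le_iff: "maxk x \<le> K \<longleftrightarrow> (\<forall>i. x $ i \<le> K)"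
  using maxk_gt_iff[of K x] by (meson not_less)

lemma finite_maxk_le: "finite {x::nat^'n::finite. maxk x \<le> K}"
  using finite_vec_box[of "\<lambda>_. {..K}"] by (simp add: maxk_le_iff)

lemma card_maxk_le: "card {x::nat^'n::finite. maxk x \<le> K} = (K + 1) ^ CARD('n)"
  using card_vec_box[of "\<lambda>_. {..K}"] by (simp add: maxk_le_iff)

lemma infsum_mixpmf_tail_le:
  fixes Q :: "(real^'d::finite) measure"
  assumes bpos: "\<forall>k. b k > 0" and Q: "valid_mixing b Q"
    and supp: "AE \<theta> in Q. \<forall>j. \<theta> $ j \<le> th" and "0 < th" "0 \<le> t0"
    and ratio: "\<And>k. W \<le> k \<Longrightarrow> b (Suc k) / b k \<le> t0 / th" and "W \<le> K + 1"
  shows "infsum (mixpmf b Q) {k. K < maxk k} \<le> real CARD('d) * t0 ^ (K + 1 - W)"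
proof (rule infsum_le_finite_sums[OF mixpmf_summable_on[OF bpos Q]])
  fix F :: "(nat^'d) set" assume F: "finite F" "F \<subseteq> {k. K < maxk k}"
  show "sum (mixpmf b Q) F \<le> real CARD('d) * t0 ^ (K + 1 - W)"
    unfolding mixpmf_def
  proof (rule sum_integral_le_AE[OF _ F(1)])
    show "prob_space Q" using Q by (simp add: valid_mixing_def)
    show "AE \<theta> in Q. (\<forall>k. 0 \<le> (\<Prod>j\<in>UNIV. fdens b (\<theta> $ j) (k $ j))) \<and>
        (\<Sum>k\<in>F. \<Prod>j\<in>UNIV. fdens b (\<theta> $ j) (k $ j)) \<le> real CARD('d) * t0 ^ (K + 1 - W)"
      using AE_Theta[OF Q] supp
    proof eventually_elim
      case (elim \<theta>)
      then have \<theta>: "\<theta> $ j \<in> Tset b" "\<theta> $ j \<le> th" for j by (auto simp: Theta_def)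
      have tail: "(\<Sum>y\<in>{K<..N}. fdens b (\<theta> $ j) y) \<le> t0 ^ (K + 1 - W)" for j N
        using \<theta> by (intro fdens_tail_le[OF bpos _ _ \<open>0 < th\<close> \<open>0 \<le> t0\<close> ratio \<open>W \<le> K + 1\<close>])
      have "(\<Sum>k\<in>F. \<Prod>j\<in>UNIV. fdens b (\<theta> $ j) (k $ j)) \<le> real CARD('d) * t0 ^ (K + 1 - W)"
        by (rule sum_prod_tail_le[OF _ _ tail F(1)])
          (use F(2) in \<open>auto simp: maxk_gt_iff intro: fdens_nonneg[OF bpos \<theta>(1)] sum_fdens_le_1[OF bpos \<theta>(1)]\<close>)
      then show ?case using \<theta> by (auto intro!: prod_nonneg fdens_nonneg bpos)
    qed
  qed
qed

section \<open>The constants and the truncation level\<close>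

lemma t0c_bounds:
  assumes "Rad b \<noteq> \<infinity> \<longrightarrow> 0 < q0 \<and> q0 < 1"
  shows "1/2 \<le> t0c b q0" "t0c b q0 < 1"
  using assms by (auto simp: t0c_def)

lemma thetac_pos:
  assumes "Rad b > 0" "Rad b \<noteq> \<infinity> \<longrightarrow> 0 < q0" "Rad b = \<infinity> \<longrightarrow> 0 < M"
  shows "0 < thetac b q0 M"
  using assms by (cases "Rad b") (auto simp: thetac_def)

lemma ratio_limit_lt_t0c_div_thetac:
  assumes bpos: "\<forall>k. b k > 0" and "Rad b > 0"
    and q0: "Rad b \<noteq> \<infinity> \<longrightarrow> 0 < q0 \<and> q0 < 1" and "Rad b = \<infinity> \<longrightarrow> 0 < M"
    and lim: "(\<lambda>k. b (Suc k) / b k) \<longlonglongrightarrow> c"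
  shows "c < t0c b q0 / thetac b q0 M"
proof (cases "c = 0")
  case True
  then show ?thesis
    using t0c_bounds[OF q0] thetac_pos[of b q0 M] assms by simp
next
  case False
  \<comment> \<open>by the ratio test R = 1/c, hence c * thetac = q0 < (q0 + 1)/2 = t0c\<close>
  have "(\<lambda>k. norm (b k) / norm (b (Suc k))) \<longlonglongrightarrow> inverse c"
    using tendsto_inverse[OF lim False] bpos by (simp add: abs_of_pos)
  then have R: "Rad b = ereal (inverse c)"
    unfolding Rad_def using False by (intro conv_radius_ratio_limit_nonzero) auto
  then have "0 < c" using \<open>Rad b > 0\<close> by simp
  with R q0 show ?thesis by (simp add: t0c_def thetac_def field_simps)
qed

lemma Wc_spec:
  assumes lim: "(\<lambda>k. b (Suc k) / b k) \<longlonglongrightarrow> c" and "c < t0 / th"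
  shows "3 \<le> Wc b t0 th" "\<And>k. Wc b t0 th \<le> k \<Longrightarrow> b (Suc k) / b k \<le> t0 / th"
proof -
  obtain w0 where w0: "\<And>k. w0 \<le> k \<Longrightarrow> b (Suc k) / b k < t0 / th"
    using order_tendstoD(2)[OF lim \<open>c < t0 / th\<close>] by (auto simp: eventually_sequentially)
  have bdd: "bdd_above ((\<lambda>k. b (Suc k) / b k) ` A)" for A
    using Bseq_bdd_above[OF convergent_imp_Bseq[OF convergentI[OF lim]]] by (rule bdd_above_mono) auto
  let ?P = "\<lambda>w. 3 \<le> w \<and> (SUP k\<in>{w..}. b (Suc k) / b k) \<le> t0 / th"
  have "(SUP k\<in>{max 3 w0..}. b (Suc k) / b k) \<le> t0 / th"
    by (rule cSUP_least) (auto intro: less_imp_le w0)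
  then have "?P (max 3 w0)" by simp
  then have W: "?P (Wc b t0 th)"
    unfolding Wc_def by (rule LeastI)
  then show "3 \<le> Wc b t0 th" by simp
  show "b (Suc k) / b k \<le> t0 / th" if "Wc b t0 th \<le> k" for k
    using W cSUP_upper[OF _ bdd, of k "{Wc b t0 th..}"] that by simp
qed

lemma Nc_gt: "1 / (t0 ^ (Wc b t0 th - 1) * (1 - t0)) < real (Nc b d t0 th \<delta>0 \<eta>0 V)"
proof -
  have floor: "y < real (nat \<lfloor>z\<rfloor> + 1)" if "y \<le> z" for y z :: real
    using that by (cases "0 \<le> z") linarith+
  show ?thesis
    unfolding Nc_def by (intro floor max.cobounded2)
qed

lemma large_n_bounds:
  fixes t0 :: real
  assumes t0: "1/2 \<le> t0" "t0 < 1" and "1 \<le> W" and n: "1 / (t0 ^ (W - 1) * (1 - t0)) < real n"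
  shows "real W * ln (1 / t0) < ln (real n)" "3 \<le> n"
proof -
  have pos: "0 < t0 ^ (W - 1) * (1 - t0)" using t0 by simp
  have "1 < real n * (t0 ^ (W - 1) * (1 - t0))"
    using n pos by (simp add: divide_less_eq)
  also have "\<dots> \<le> real n * (t0 ^ (W - 1) * t0)"
    using t0 by (intro mult_left_mono) auto
  also have "\<dots> = real n * t0 ^ W" using \<open>1 \<le> W\<close> by (simp add: power_eq_if)
  finally have "0 < ln (real n * t0 ^ W)" by simp
  moreover have "0 < real n" using n pos by (meson divide_pos_pos less_trans zero_less_one)
  ultimately show "real W * ln (1 / t0) < ln (real n)"
    using t0 by (simp add: ln_mult ln_realpow ln_div)
  have "2 \<le> 1 / (1 - t0)" using t0 by (simp add: le_divide_eq)
  also have "\<dots> \<le> 1 / (t0 ^ (W - 1) * (1 - t0))"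
    using t0 pos by (intro divide_left_mono mult_left_le_one_le power_le_one) auto
  finally show "3 \<le> n" using n by linarith
qed

lemma power_nat_ceiling_log_le:
  fixes t y :: real
  assumes "0 < t" "t < 1" "0 < y"
  shows "t ^ nat \<lceil>ln y / ln (1 / t)\<rceil> \<le> 1 / y"
proof -
  define l where "l = ln (1 / t)"
  have "0 < l" "ln t = - l" using assms by (simp_all add: l_def ln_div)
  have "t ^ nat \<lceil>ln y / l\<rceil> = t powr real (nat \<lceil>ln y / l\<rceil>)"
    using assms by (simp add: powr_realpow)
  also have "\<dots> \<le> t powr (ln y / l)"
    using assms by (intro powr_mono') linarith+
  also have "\<dots> = 1 / y"
    using assms \<open>0 < l\<close> \<open>ln t = - l\<close> by (simp add: powr_def exp_minus inverse_eq_divide)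
  finally show ?thesis by (simp add: l_def)
qed

lemma Kn_le:
  fixes p0 :: "nat^'d::finite \<Rightarrow> real" and t0 :: real
  assumes t0: "1/2 \<le> t0" "t0 < 1" and "3 \<le> W"
    and tail: "\<And>K. W \<le> K + 1 \<Longrightarrow> infsum p0 {k. K < maxk k} \<le> real CARD('d) * t0 ^ (K + 1 - W)"
    and n: "1 / (t0 ^ (W - 1) * (1 - t0)) < real n"
  shows "3 \<le> ln (real (n * CARD('d))) / ln (1 / t0)"
    "real (Kn p0 n + 1) \<le> 3 * (ln (real (n * CARD('d))) / ln (1 / t0))"
proof -
  define D where "D = CARD('d)"
  define L where "L = ln (real (n * D))"
  define l where "l = ln (1 / t0)"
  have "0 < l" using t0 by (simp add: l_def)
  have "1 \<le> D" by (simp add: D_def Suc_le_eq)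
  have n3: "3 \<le> n" and Wl: "real W * l < ln (real n)"
    using large_n_bounds[OF t0 _ n] \<open>3 \<le> W\<close> by (auto simp: l_def)
  have "n \<le> n * D" using \<open>1 \<le> D\<close> by simp
  then have nD: "3 \<le> real (n * D)" using n3 by linarith
  have "ln (real n) \<le> L"
    unfolding L_def using n3 \<open>n \<le> n * D\<close> by (intro ln_mono) auto
  then have "real W < L / l" using Wl \<open>0 < l\<close> by (simp add: field_simps)
  then show "3 \<le> ln (real (n * CARD('d))) / ln (1 / t0)"
    using \<open>3 \<le> W\<close> by (simp add: L_def l_def D_def)
  have "ln 3 \<le> L" unfolding L_def using nD by (intro ln_mono) auto
  then have "1 < L" using ln3_gt_1 by linarith
  define j where "j = nat \<lceil>L / l\<rceil>"
  have "real j = real_of_int \<lceil>L / l\<rceil>" using \<open>1 < L\<close> \<open>0 < l\<close> by (simp add: j_def)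
  then have "real j < L / l + 1" by linarith
  have "infsum p0 {k. W - 1 + j < maxk k} \<le> real D * t0 ^ j"
    using tail[of "W - 1 + j"] \<open>3 \<le> W\<close> by (simp add: D_def)
  also have "\<dots> \<le> real D * (1 / real (n * D))"
    using power_nat_ceiling_log_le[of t0 "real (n * D)"] t0 nD
    by (intro mult_left_mono) (auto simp: j_def L_def l_def)
  also have "\<dots> = 1 / real n" using \<open>1 \<le> D\<close> by simp
  also have "\<dots> \<le> L ^ (2 + D) / real n"
    using \<open>1 < L\<close> by (intro divide_right_mono one_le_power) auto
  finally have "Kn p0 n \<le> W - 1 + j"
    unfolding Kn_def L_def D_def by (rule Least_le)
  then have "Kn p0 n + 1 \<le> W + j" using \<open>3 \<le> W\<close> by linarith
  then have "real (Kn p0 n + 1) \<le> real W + real j" by (metis of_nat_add of_nat_le_iff)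
  also have "\<dots> \<le> 3 * (L / l)" using \<open>real W < L / l\<close> \<open>real j < L / l + 1\<close> \<open>3 \<le> W\<close> by linarith
  finally show "real (Kn p0 n + 1) \<le> 3 * (ln (real (n * CARD('d))) / ln (1 / t0))"
    by (simp add: L_def l_def D_def)
qed

lemma Kn_mixpmf_le:
  fixes Q0 :: "(real ^ 'd::finite) measure"
  assumes b_pos: "\<forall>k. b k > 0" and R_pos: "Rad b > 0" and Q0: "valid_mixing b Q0"
    and A1_fin: "Rad b \<noteq> \<infinity> \<longrightarrow> 0 < q0 \<and> q0 < 1 \<and>
          msupp Q0 \<subseteq> {\<theta>. \<forall>j. 0 \<le> \<theta> $ j \<and> \<theta> $ j \<le> q0 * real_of_ereal (Rad b)}"
    and A1_inf: "Rad b = \<infinity> \<longrightarrow> 0 < M \<and> msupp Q0 \<subseteq> {\<theta>. \<forall>j. 0 \<le> \<theta> $ j \<and> \<theta> $ j \<le> M}"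
    and A4: "convergent (\<lambda>k. b (Suc k) / b k)"
    and n_large: "n \<ge> Nc b CARD('d) (t0c b q0) (thetac b q0 M) \<delta>0 \<eta>0 V"
  shows "3 \<le> ln (real (n * CARD('d))) / ln (1 / t0c b q0)"
    "real (Kn (mixpmf b Q0) n + 1) \<le> 3 * (ln (real (n * CARD('d))) / ln (1 / t0c b q0))"
proof -
  define t0 th W where "t0 = t0c b q0" and "th = thetac b q0 M" and "W = Wc b t0 th"
  have t0: "1/2 \<le> t0" "t0 < 1" and "0 < th"
    using t0c_bounds thetac_pos R_pos A1_fin A1_inf by (auto simp: t0_def th_def)
  obtain c where lim: "(\<lambda>k. b (Suc k) / b k) \<longlonglongrightarrow> c" using A4 by (auto simp: convergent_def)
  have W: "3 \<le> W" "\<And>k. W \<le> k \<Longrightarrow> b (Suc k) / b k \<le> t0 / th"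
    using Wc_spec[OF lim ratio_limit_lt_t0c_div_thetac[OF b_pos R_pos _ _ lim]] A1_fin A1_inf
    by (auto simp: t0_def th_def W_def)
  have "msupp Q0 \<subseteq> {\<theta>. \<forall>j. \<theta> $ j \<le> th}"
    using A1_fin A1_inf by (cases "Rad b = \<infinity>") (auto simp: th_def thetac_def)
  then have "AE \<theta> in Q0. \<theta> \<in> {\<theta>. \<forall>j. \<theta> $ j \<le> th}"
    using Q0 by (intro AE_msupp_subset) (auto simp: valid_mixing_def)
  then have tail: "infsum (mixpmf b Q0) {k. K < maxk k} \<le> real CARD('d) * t0 ^ (K + 1 - W)"
    if "W \<le> K + 1" for K
    using t0 \<open>0 < th\<close> by (intro infsum_mixpmf_tail_le[OF b_pos Q0 _ _ _ W(2) that]) auto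
  have "1 / (t0 ^ (W - 1) * (1 - t0)) < real n"
    using Nc_gt[of t0 b th] n_large unfolding t0_def th_def W_def by (smt (verit) of_nat_mono)
  from Kn_le[OF t0 W(1) tail this] show "3 \<le> ln (real (n * CARD('d))) / ln (1 / t0c b q0)"
    "real (Kn (mixpmf b Q0) n + 1) \<le> 3 * (ln (real (n * CARD('d))) / ln (1 / t0c b q0))"
    by (simp_all add: t0_def)
qed

section \<open>The envelope of the class\<close>

lemma hell_nonneg: "0 \<le> hell p q"
  by (simp add: hell_def infsum_nonneg)

lemma hell_pointwise_le:
  fixes p q :: "'a \<Rightarrow> real"
  assumes p: "\<And>k. 0 \<le> p k" "p summable_on UNIV" and q: "\<And>k. 0 \<le> q k" "q summable_on UNIV"
    and "hell p q \<le> \<delta>"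
  shows "\<bar>sqrt (p k) - sqrt (q k)\<bar> \<le> sqrt 2 * \<delta>"
proof -
  define h where "h = (\<lambda>k. (sqrt (p k) - sqrt (q k))^2)"
  have h_le: "h k \<le> p k + q k" for k
    using p(1)[of k] q(1)[of k] by (simp add: h_def power2_eq_square algebra_simps)
  have "h summable_on UNIV"
    using summable_on_add[OF p(2) q(2)] by (rule summable_on_comparison_test) (use h_le in \<open>auto simp: h_def\<close>)
  then have "h k \<le> infsum h UNIV"
    using infsum_mono_neutral[of h "{k}" h UNIV] by (simp add: h_def)
  also have "\<dots> = 2 * (hell p q)^2"
    by (simp add: hell_def h_def infsum_nonneg)
  also have "\<dots> \<le> 2 * \<delta>^2"
    using \<open>hell p q \<le> \<delta>\<close> by (intro mult_left_mono power_mono) (simp_all add: hell_nonneg)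
  finally have "sqrt (h k) \<le> sqrt (2 * \<delta>^2)" by (rule real_sqrt_le_mono)
  moreover have "0 \<le> \<delta>" using \<open>hell p q \<le> \<delta>\<close> hell_nonneg[of p q] by linarith
  ultimately show ?thesis by (simp add: h_def real_sqrt_mult)
qed

lemma abs_diff_div_add_le_1:
  fixes p q :: real
  assumes "0 \<le> p" "0 \<le> q"
  shows "\<bar>(p - q) / (p + q)\<bar> \<le> 1"
  using assms by (cases "p + q = 0") (auto simp: abs_divide divide_le_eq abs_le_iff)

lemma sqrt_mult_abs_diff_div_add_le:
  fixes p q \<delta> :: real
  assumes "0 \<le> p" "0 \<le> q" and close: "\<bar>sqrt p - sqrt q\<bar> \<le> sqrt 2 * \<delta>"
  shows "sqrt q * \<bar>(p - q) / (p + q)\<bar> \<le> 2 * \<delta>"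
proof -
  define a c where "a = sqrt p" and "c = sqrt q"
  have ac: "0 \<le> a" "0 \<le> c" "p = a^2" "q = c^2" using assms by (simp_all add: a_def c_def)
  have "0 \<le> sqrt 2 * \<delta>" using close abs_ge_zero order_trans by blast
  then have "0 \<le> \<delta>" by (simp add: zero_le_mult_iff)
  show ?thesis
  proof (cases "a^2 + c^2 = 0")
    case False
    then have pos: "0 < a^2 + c^2" by (smt (verit) zero_le_power2)
    have key: "c * (a + c) \<le> 5/4 * (a^2 + c^2)"
      using sum_squares_ge_zero[of "a - c/2" "a/2"] by (simp add: power2_eq_square algebra_simps)
    have "p - q = (a - c) * (a + c)" "p + q = a^2 + c^2"
      using ac by (simp_all add: power2_eq_square algebra_simps)
    then have "sqrt q * \<bar>(p - q) / (p + q)\<bar> = c * (a + c) * \<bar>a - c\<bar> / (a^2 + c^2)"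
      using ac pos by (simp add: abs_divide abs_mult c_def[symmetric])
    also have "\<dots> \<le> 5/4 * \<bar>a - c\<bar>"
    proof -
      have "c * (a + c) * \<bar>a - c\<bar> \<le> 5/4 * \<bar>a - c\<bar> * (a^2 + c^2)"
        using mult_right_mono[OF key abs_ge_zero[of "a - c"]] by (simp add: algebra_simps)
      then show ?thesis by (subst pos_divide_le_eq[OF pos])
    qed
    also have "\<dots> \<le> 5/4 * (sqrt 2 * \<delta>)" using close by (simp add: a_def c_def)
    also have "\<dots> \<le> 5/4 * (3/2 * \<delta>)"
      using \<open>0 \<le> \<delta>\<close> by (intro mult_left_mono mult_right_mono real_le_lsqrt) (auto simp: power2_eq_square)
    also have "\<dots> \<le> 2 * \<delta>" using \<open>0 \<le> \<delta>\<close> by simp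
    finally show ?thesis .
  qed (use ac \<open>0 \<le> \<delta>\<close> in simp)
qed

lemma Gn_envelope:
  fixes Q0 :: "(real^'d::finite) measure"
  assumes bpos: "\<forall>k. b k > 0" and Q0: "valid_mixing b Q0" and g: "g \<in> Gn b (mixpmf b Q0) n \<delta>"
  shows "Kn (mixpmf b Q0) n < maxk k \<Longrightarrow> g k = 0" "\<bar>g k\<bar> \<le> 1"
    "sqrt (mixpmf b Q0 k) * \<bar>g k\<bar> \<le> 2 * \<delta>"
proof -
  define p0 where "p0 = mixpmf b Q0"
  obtain Q where Q: "valid_mixing b Q" and "hell (mixpmf b Q) p0 \<le> \<delta>"
    and g_eq: "g = (\<lambda>k. (mixpmf b Q k - p0 k) / (mixpmf b Q k + p0 k) * (if maxk k \<le> Kn p0 n then 1 else 0))"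
    using g unfolding Gn_def Mset_def p0_def by blast
  have "0 \<le> \<delta>" using \<open>hell (mixpmf b Q) p0 \<le> \<delta>\<close> hell_nonneg[of "mixpmf b Q" p0] by linarith
  have p: "0 \<le> mixpmf b Q k" and p0: "0 \<le> p0 k"
    using mixpmf_nonneg[OF bpos] Q Q0 by (auto simp: p0_def)
  have "\<bar>sqrt (mixpmf b Q k) - sqrt (p0 k)\<bar> \<le> sqrt 2 * \<delta>"
    using mixpmf_nonneg[OF bpos] mixpmf_summable_on[OF bpos] Q Q0 \<open>hell (mixpmf b Q) p0 \<le> \<delta>\<close>
    unfolding p0_def by (intro hell_pointwise_le) auto
  from sqrt_mult_abs_diff_div_add_le[OF p p0 this] abs_diff_div_add_le_1[OF p p0]
  show "sqrt (mixpmf b Q0 k) * \<bar>g k\<bar> \<le> 2 * \<delta>" "\<bar>g k\<bar> \<le> 1"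
    using \<open>0 \<le> \<delta>\<close> by (auto simp: g_eq p0_def)
  show "Kn (mixpmf b Q0) n < maxk k \<Longrightarrow> g k = 0" by (simp add: g_eq p0_def)
qed

section \<open>Bracketing entropy\<close>

lemma nn_integral_Pmeas_finite_support:
  fixes p0 h :: "nat^'d::finite \<Rightarrow> real"
  assumes "\<And>k. 0 \<le> p0 k" and "finite S" and "\<And>k. k \<notin> S \<Longrightarrow> h k = 0"
  shows "(\<integral>\<^sup>+ k. ennreal ((h k)^2) \<partial>Pmeas p0) = ennreal (\<Sum>k\<in>S. p0 k * (h k)^2)"
proof -
  have "(\<integral>\<^sup>+ k. ennreal ((h k)^2) \<partial>Pmeas p0) = (\<integral>\<^sup>+ k. ennreal (p0 k * (h k)^2) \<partial>count_space UNIV)"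
    unfolding Pmeas_def by (subst nn_integral_density) (auto simp: ennreal_mult'')
  also have "\<dots> = (\<Sum>k\<in>S. ennreal (p0 k * (h k)^2))"
    using assms by (intro nn_integral_count_space') auto
  also have "\<dots> = ennreal (\<Sum>k\<in>S. p0 k * (h k)^2)"
    using assms by (intro sum_ennreal) auto
  finally show ?thesis .
qed

lemma grid_cell:
  fixes y a :: real
  assumes "\<bar>y\<bar> \<le> a" "0 < a" "0 < N"
  obtains c where "c < N" "- a + real c * (2 * a / N) \<le> y" "y \<le> - a + real (Suc c) * (2 * a / N)"
proof -
  define w where "w = 2 * a / N"
  define t where "t = (y + a) / w"
  have "0 < w" using assms by (simp add: w_def)
  have t: "0 \<le> t" "t \<le> real N" "y = - a + t * w"
    using assms \<open>0 < w\<close> by (auto simp: t_def pos_divide_le_eq w_def abs_le_iff)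
  define c where "c = min (N - 1) (nat \<lfloor>t\<rfloor>)"
  have "real c \<le> t" "t \<le> real (Suc c)"
    using t \<open>0 < N\<close> by (auto simp: c_def min_def of_nat_diff) linarith+
  then show ?thesis
    using that[of c] t(3) \<open>0 < w\<close> \<open>0 < N\<close>
    by (simp add: c_def w_def[symmetric] mult_right_mono)
qed

definition grid_bracket :: "('a \<Rightarrow> real) \<Rightarrow> nat \<Rightarrow> 'a set \<Rightarrow> ('a \<Rightarrow> nat)
    \<Rightarrow> ('a \<Rightarrow> real) \<times> ('a \<Rightarrow> real)" where
  "grid_bracket a N S c =
     ((\<lambda>k. if k \<in> S then - a k + real (c k) * (2 * a k / N) else 0),
      (\<lambda>k. if k \<in> S then - a k + real (Suc (c k)) * (2 * a k / N) else 0))"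

lemma grid_bracket_size:
  fixes p0 a :: "nat^'d::finite \<Rightarrow> real"
  assumes p0: "\<And>k. 0 \<le> p0 k" and "finite S" "0 < N" and a: "\<And>k. k \<in> S \<Longrightarrow> 0 < a k"
    and size: "(\<Sum>k\<in>S. p0 k * (2 * a k)^2) \<le> (real N * u)^2"
  shows "case grid_bracket a N S c of (L, U) \<Rightarrow>
    (\<forall>k. L k \<le> U k) \<and> (\<integral>\<^sup>+ k. ennreal ((U k - L k)^2) \<partial>Pmeas p0) \<le> ennreal (u^2)"
proof -
  obtain L U where LU: "grid_bracket a N S c = (L, U)" by (cases "grid_bracket a N S c")
  define w where "w k = (if k \<in> S then 2 * a k / N else 0)" for k
  have width: "U k - L k = w k" for k
    using LU by (auto simp: grid_bracket_def w_def algebra_simps add_divide_distrib)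
  have w_nonneg: "0 \<le> w k" for k using a[of k] \<open>0 < N\<close> by (simp add: w_def less_imp_le)
  have "(\<integral>\<^sup>+ k. ennreal ((U k - L k)^2) \<partial>Pmeas p0) = ennreal (\<Sum>k\<in>S. p0 k * (w k)^2)"
    unfolding width using p0 \<open>finite S\<close> by (intro nn_integral_Pmeas_finite_support) (auto simp: w_def)
  also have "(\<Sum>k\<in>S. p0 k * (w k)^2) = (\<Sum>k\<in>S. p0 k * (2 * a k)^2) / (real N)^2"
    by (simp add: w_def power_divide sum_divide_distrib)
  also have "\<dots> \<le> u^2"
    using size \<open>0 < N\<close> by (simp add: divide_le_eq power_mult_distrib mult.commute)
  finally have "(\<integral>\<^sup>+ k. ennreal ((U k - L k)^2) \<partial>Pmeas p0) \<le> ennreal (u^2)"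
    by (simp add: ennreal_leI)
  moreover have "L k \<le> U k" for k using width[of k] w_nonneg[of k] by linarith
  ultimately show ?thesis by (simp add: LU)
qed

lemma grid_bracket_covers:
  fixes y a :: "'a \<Rightarrow> real"
  assumes "0 < N" and env: "\<And>k. k \<in> S \<Longrightarrow> \<bar>y k\<bar> \<le> a k" and a: "\<And>k. k \<in> S \<Longrightarrow> 0 < a k"
    and supp: "\<And>k. k \<notin> S \<Longrightarrow> y k = 0"
  obtains c where "c \<in> PiE S (\<lambda>_. {..<N})"
    "case grid_bracket a N S c of (L, U) \<Rightarrow> \<forall>k. L k \<le> y k \<and> y k \<le> U k"
proof -
  have "\<forall>k\<in>S. \<exists>c. c < N \<and> - a k + real c * (2 * a k / N) \<le> y k
      \<and> y k \<le> - a k + real (Suc c) * (2 * a k / N)"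
    using grid_cell[OF env a \<open>0 < N\<close>] by metis
  then obtain c where "\<forall>k\<in>S. c k < N \<and> - a k + real (c k) * (2 * a k / N) \<le> y k
      \<and> y k \<le> - a k + real (Suc (c k)) * (2 * a k / N)"
    by (metis bchoice)
  then show ?thesis
    using that[of "restrict c S"] supp by (auto simp: grid_bracket_def)
qed

lemma brack_num_le_grid:
  fixes p0 a :: "nat^'d::finite \<Rightarrow> real"
  assumes p0: "\<And>k. 0 \<le> p0 k" and "finite S" and "0 < N"
    and supp: "\<And>g k. g \<in> G \<Longrightarrow> k \<notin> S \<Longrightarrow> g k = 0"
    and env: "\<And>g k. g \<in> G \<Longrightarrow> k \<in> S \<Longrightarrow> \<bar>g k\<bar> \<le> a k" and a: "\<And>k. k \<in> S \<Longrightarrow> 0 < a k"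
    and size: "(\<Sum>k\<in>S. p0 k * (2 * a k)^2) \<le> (real N * u)^2"
  shows "brack_num (Pmeas p0) G u \<le> enat (N ^ card S)"
proof -
  define C where "C = PiE S (\<lambda>_. {..<N})"
  have "finite C" "card C = N ^ card S"
    using \<open>finite S\<close> by (simp_all add: C_def finite_PiE card_PiE)
  have "bracket_cover (Pmeas p0) G u (grid_bracket a N S ` C)"
    unfolding bracket_cover_def
  proof (intro conjI ballI)
    show "finite (grid_bracket a N S ` C)" using \<open>finite C\<close> by simp
  next
    fix LU assume "LU \<in> grid_bracket a N S ` C"
    then obtain c where "LU = grid_bracket a N S c" by blast
    then show "case LU of (L, U) \<Rightarrow>
        (\<forall>k. L k \<le> U k) \<and> (\<integral>\<^sup>+ k. ennreal ((U k - L k)^2) \<partial>Pmeas p0) \<le> ennreal (u^2)"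
      using grid_bracket_size[OF p0 \<open>finite S\<close> \<open>0 < N\<close> a size, of c] by simp
  next
    fix g assume "g \<in> G"
    obtain c where "c \<in> PiE S (\<lambda>_. {..<N})"
      and cov: "case grid_bracket a N S c of (L, U) \<Rightarrow> \<forall>k. L k \<le> g k \<and> g k \<le> U k"
      by (rule grid_bracket_covers[OF \<open>0 < N\<close> env[OF \<open>g \<in> G\<close>] a supp[OF \<open>g \<in> G\<close>]])
    obtain L U where LU: "grid_bracket a N S c = (L, U)" by (cases "grid_bracket a N S c")
    have "(L, U) \<in> grid_bracket a N S ` C"
      using image_eqI[of "(L, U)" "grid_bracket a N S" c C] LU \<open>c \<in> PiE S (\<lambda>_. {..<N})\<close>
      by (simp add: C_def)
    moreover have "\<forall>k. L k \<le> g k \<and> g k \<le> U k" using cov by (simp add: LU)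
    ultimately show "\<exists>(L, U)\<in>grid_bracket a N S ` C. \<forall>k. L k \<le> g k \<and> g k \<le> U k" by blast
  qed
  then have "brack_num (Pmeas p0) G u \<le> enat (card (grid_bracket a N S ` C))"
    unfolding brack_num_def by (intro INF_lower) simp
  also have "\<dots> \<le> enat (N ^ card S)"
    using card_image_le[OF \<open>finite C\<close>, of "grid_bracket a N S"] \<open>card C = N ^ card S\<close> by simp
  finally show ?thesis .
qed

lemma HB_le_of_brack_num_le:
  assumes "brack_num P G u \<le> enat (N ^ m)" and "1 \<le> N"
  obtains x where "HB P G u = ereal x" "x \<le> real m * ln (real N)"
proof (cases "brack_num P G u")
  case (enat k)
  then have "k \<le> N ^ m" using assms by simp
  then have "ln (real k) \<le> ln (real (N ^ m))" if "k \<noteq> 0"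
    using that by (intro ln_mono) auto
  then have "ln (real k) \<le> real m * ln (real N)"
    using \<open>1 \<le> N\<close> by (cases "k = 0") (auto simp: ln_realpow)
  then show ?thesis using that enat by (simp add: HB_def)
qed (use assms in simp)

lemma sqrt_one_plus_entropy_le:
  fixes m \<delta> u x :: real
  assumes "1 \<le> m" "0 < u" "u \<le> \<delta>" and x: "x \<le> m * ln (real (nat \<lceil>4 * sqrt m * \<delta> / u\<rceil>))"
  shows "sqrt (1 + x) \<le> sqrt (1 + m * ln (4 * sqrt m + 1)) + sqrt (m * \<delta>) * u powr (-1/2)"
proof -
  define N where "N = nat \<lceil>4 * sqrt m * \<delta> / u\<rceil>"
  have "1 \<le> \<delta> / u" "0 < 4 * sqrt m * \<delta> / u" using assms by simp_all
  then have "0 < real N" by (simp add: N_def)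
  have "real N \<le> 4 * sqrt m * \<delta> / u + 1"
    using \<open>0 < 4 * sqrt m * \<delta> / u\<close> by (simp add: N_def)
  also have "\<dots> \<le> (4 * sqrt m + 1) * (\<delta> / u)"
    using \<open>1 \<le> \<delta> / u\<close> by (simp add: algebra_simps)
  finally have "ln (real N) \<le> ln ((4 * sqrt m + 1) * (\<delta> / u))"
    using \<open>0 < real N\<close> by (rule ln_mono)
  also have "\<dots> = ln (4 * sqrt m + 1) + ln (\<delta> / u)"
  proof (rule ln_mult_pos)
    show "0 < 4 * sqrt m + 1" using real_sqrt_ge_one[OF \<open>1 \<le> m\<close>] by linarith
  qed (use \<open>1 \<le> \<delta> / u\<close> in simp)
  also have "\<dots> \<le> ln (4 * sqrt m + 1) + \<delta> / u"
    using ln_le_minus_one[of "\<delta> / u"] \<open>1 \<le> \<delta> / u\<close> by simp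
  finally have "m * ln (real N) \<le> m * (ln (4 * sqrt m + 1) + \<delta> / u)"
    using \<open>1 \<le> m\<close> by (simp add: mult_left_mono)
  then have "1 + x \<le> (1 + m * ln (4 * sqrt m + 1)) + m * (\<delta> / u)"
    using x unfolding N_def[symmetric] by (simp add: distrib_left)
  then have "sqrt (1 + x) \<le> sqrt ((1 + m * ln (4 * sqrt m + 1)) + m * (\<delta> / u))"
    by simp
  also have "\<dots> \<le> sqrt (1 + m * ln (4 * sqrt m + 1)) + sqrt (m * (\<delta> / u))"
    using assms by (intro sqrt_add_le_add_sqrt) auto
  also have "sqrt (m * (\<delta> / u)) = sqrt (m * \<delta>) * u powr (-1/2)"
    using assms by (simp add: powr_minus_divide powr_half_sqrt real_sqrt_mult real_sqrt_divide)
  finally show ?thesis .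
qed

lemma JB_le_of_HB_le:
  fixes P :: "'a measure" and G :: "('a \<Rightarrow> real) set" and m \<delta> :: real
  assumes "0 < \<delta>" "1 \<le> m"
    and HB: "\<And>u. 0 < u \<Longrightarrow> u \<le> \<delta> \<Longrightarrow>
       \<exists>x. HB P G u = ereal x \<and> x \<le> m * ln (real (nat \<lceil>4 * sqrt m * \<delta> / u\<rceil>))"
  shows "JB P G \<delta> \<le> ennreal ((sqrt (1 + m * ln (4 * sqrt m + 1)) + 2 * sqrt m) * \<delta>)"
proof -
  define A where "A = sqrt (1 + m * ln (4 * sqrt m + 1))"
  define B where "B = sqrt (m * \<delta>)"
  have "0 \<le> A" "0 \<le> B" using assms by (simp_all add: A_def B_def)
  define H where "H u = (case HB P G u of ereal x \<Rightarrow> ennreal (sqrt (1 + x)) | _ \<Rightarrow> \<infinity>)" for u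
  have H: "H u \<le> ennreal (A + B * u powr (-1/2))" if u: "0 < u" "u \<le> \<delta>" for u
  proof -
    obtain x where "HB P G u = ereal x" "x \<le> m * ln (real (nat \<lceil>4 * sqrt m * \<delta> / u\<rceil>))"
      using HB[OF u] by blast
    then show ?thesis
      using sqrt_one_plus_entropy_le[OF \<open>1 \<le> m\<close> u] by (simp add: H_def A_def B_def ennreal_leI)
  qed
  have "((\<lambda>u. A + B * u powr (-1/2)) has_integral (A * \<delta> + B * (\<delta> powr (1/2) / (1/2)))) {0..\<delta>}"
    using has_integral_const_real[of A 0 \<delta>] has_integral_powr_from_0[of "-1/2" \<delta>] \<open>0 < \<delta>\<close>
    by (intro has_integral_add has_integral_mult_right) (auto simp: mult.commute)
  moreover have "A * \<delta> + B * (\<delta> powr (1/2) / (1/2)) = (A + 2 * sqrt m) * \<delta>"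
    using \<open>0 < \<delta>\<close> by (simp add: B_def powr_half_sqrt real_sqrt_mult algebra_simps)
  ultimately have int: "(\<integral>\<^sup>+ u. ennreal (indicator {0..\<delta>} u * (A + B * u powr (-1/2))) \<partial>lborel)
      = ennreal ((A + 2 * sqrt m) * \<delta>)"
    using \<open>0 \<le> A\<close> \<open>0 \<le> B\<close> by (intro nn_integral_has_integral_lebesgue) auto
  have "JB P G \<delta> = (\<integral>\<^sup>+ u. H u * indicator {0..\<delta>} u \<partial>lborel)"
    by (simp add: JB_def H_def)
  also have "\<dots> \<le> (\<integral>\<^sup>+ u. ennreal (indicator {0..\<delta>} u * (A + B * u powr (-1/2))) \<partial>lborel)"
  proof (rule nn_integral_mono_AE)
    show "AE u in lborel. H u * indicator {0..\<delta>} u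
        \<le> ennreal (indicator {0..\<delta>} u * (A + B * u powr (-1/2)))"
      using AE_lborel_singleton[of 0]
    proof eventually_elim
      case (elim u)
      then show ?case using H[of u] by (auto simp: indicator_def)
    qed
  qed
  finally show ?thesis using int by (simp add: A_def)
qed

lemma JB_le_of_envelope:
  fixes p0 :: "nat^'d::finite \<Rightarrow> real"
  assumes p0: "\<And>k. 0 \<le> p0 k" and "finite S" "S \<noteq> {}" "0 < \<delta>"
    and supp: "\<And>g k. g \<in> G \<Longrightarrow> k \<notin> S \<Longrightarrow> g k = 0"
    and bdd: "\<And>g k. g \<in> G \<Longrightarrow> \<bar>g k\<bar> \<le> 1"
    and env: "\<And>g k. g \<in> G \<Longrightarrow> sqrt (p0 k) * \<bar>g k\<bar> \<le> 2 * \<delta>"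
  shows "JB (Pmeas p0) G \<delta>
    \<le> ennreal ((sqrt (1 + card S * ln (4 * sqrt (card S) + 1)) + 2 * sqrt (card S)) * \<delta>)"
proof (rule JB_le_of_HB_le[OF \<open>0 < \<delta>\<close>])
  show m: "1 \<le> real (card S)" using \<open>finite S\<close> \<open>S \<noteq> {}\<close> by (simp add: Suc_le_eq card_gt_0_iff)
  define a where "a k = (if 0 < p0 k then 2 * \<delta> / sqrt (p0 k) else 1)" for k
  have a: "0 < a k" for k using \<open>0 < \<delta>\<close> by (simp add: a_def)
  have g_le_a: "\<bar>g k\<bar> \<le> a k" if "g \<in> G" for g k
    using bdd[OF that] env[OF that, of k] by (simp add: a_def le_divide_eq mult.commute)
  have "p0 k * (2 * a k)^2 \<le> 16 * \<delta>^2" for k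
    using p0[of k] by (cases "0 < p0 k") (simp_all add: a_def power_divide power_mult_distrib)
  then have p0_a: "(\<Sum>k\<in>S. p0 k * (2 * a k)^2) \<le> (4 * sqrt (card S) * \<delta>)^2"
    using sum_mono[of S "\<lambda>k. p0 k * (2 * a k)^2" "\<lambda>_. 16 * \<delta>^2"] by (simp add: power_mult_distrib)
  fix u assume u: "0 < u" "u \<le> \<delta>"
  define N where "N = nat \<lceil>4 * sqrt (card S) * \<delta> / u\<rceil>"
  have "0 < N" "4 * sqrt (card S) * \<delta> \<le> real N * u"
    using u m \<open>0 < \<delta>\<close> by (simp_all add: N_def pos_divide_le_eq[symmetric])
  then have "(4 * sqrt (card S) * \<delta>)^2 \<le> (real N * u)^2"
    using \<open>0 < \<delta>\<close> by (intro power_mono) auto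
  then have "(\<Sum>k\<in>S. p0 k * (2 * a k)^2) \<le> (real N * u)^2"
    using p0_a by linarith
  then have "brack_num (Pmeas p0) G u \<le> enat (N ^ card S)"
    by (intro brack_num_le_grid[where a = a]) (use p0 \<open>finite S\<close> \<open>0 < N\<close> supp g_le_a a in auto)
  then obtain x where "HB (Pmeas p0) G u = ereal x" "x \<le> real (card S) * ln (real N)"
    using \<open>0 < N\<close> by (elim HB_le_of_brack_num_le) auto
  then show "\<exists>x. HB (Pmeas p0) G u = ereal x
      \<and> x \<le> real (card S) * ln (real (nat \<lceil>4 * sqrt (real (card S)) * \<delta> / u\<rceil>))"
    by (auto simp: N_def)
qed

lemma sqrt_entropy_le_linear:
  fixes r x :: real and D :: nat
  assumes "1 \<le> D" "3 \<le> x" "1 \<le> r" and r_le: "r \<le> (3 * x) powr (real D / 2)"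
  shows "sqrt (1 + r^2 * ln (4 * r + 1)) + 2 * r \<le> 4 * sqrt (real D) * x * r"
proof -
  have "3 \<le> real D * x" "1 \<le> sqrt (real D) * x"
    using assms mult_mono[of 1 "real D" 3 x] mult_mono[of 1 "sqrt (real D)" 1 x] by simp_all
  have "ln (4 * r + 1) \<le> ln (5 * r)" using \<open>1 \<le> r\<close> by simp
  also have "\<dots> = ln 5 + ln r" using \<open>1 \<le> r\<close> by (simp add: ln_mult_pos)
  also have "\<dots> \<le> 4 + real D / 2 * ln (3 * x)"
    using ln_le_minus_one[of 5] ln_mono[OF r_le] \<open>1 \<le> r\<close> assms by (simp add: ln_powr)
  also have "\<dots> \<le> 4 + real D / 2 * (3 * x)"
    using ln_le_minus_one[of "3 * x"] assms by (intro add_left_mono mult_left_mono) auto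
  finally have "1 + ln (4 * r + 1) \<le> 4 * (real D * x)"
    using \<open>3 \<le> real D * x\<close> by linarith
  then have "1 + r^2 * ln (4 * r + 1) \<le> r^2 * (4 * (real D * x))"
    using \<open>1 \<le> r\<close> mult_left_mono[of "1 + ln (4 * r + 1)" "4 * (real D * x)" "r^2"]
    by (simp add: distrib_left) (smt (verit) one_le_power)
  then have "sqrt (1 + r^2 * ln (4 * r + 1)) \<le> sqrt (r^2 * (4 * (real D * x)))"
    by (rule real_sqrt_le_mono)
  also have "\<dots> = r * (2 * sqrt (real D) * sqrt x)"
    using \<open>1 \<le> r\<close> by (simp add: real_sqrt_mult real_sqrt_four)
  also have "\<dots> \<le> r * (2 * sqrt (real D) * x)"
  proof -
    have "sqrt x \<le> x" using assms by (intro real_le_lsqrt) (auto simp: power2_eq_square)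
    then show ?thesis using \<open>1 \<le> r\<close> assms by (intro mult_left_mono) auto
  qed
  moreover have "2 * r \<le> r * (2 * sqrt (real D) * x)"
    using mult_left_mono[OF \<open>1 \<le> sqrt (real D) * x\<close>, of "2 * r"] \<open>1 \<le> r\<close> by (simp add: mult_ac)
  ultimately have "sqrt (1 + r^2 * ln (4 * r + 1)) + 2 * r \<le> 2 * (r * (2 * sqrt (real D) * x))"
    by linarith
  also have "\<dots> = 4 * sqrt (real D) * x * r" by (simp add: algebra_simps)
  finally show ?thesis .
qed

lemma entropy_constant_le:
  fixes x m :: real and D :: nat
  assumes "1 \<le> D" "3 \<le> x" "1 \<le> m" and m: "m \<le> (3 * x) ^ D"
  shows "sqrt (1 + m * ln (4 * sqrt m + 1)) + 2 * sqrt m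
     \<le> 3 powr ((5 + real D) / 2) * sqrt (real D) * x powr (1 + real D / 2)"
proof -
  define r where "r = sqrt m"
  have "1 \<le> r" "m = r^2" using assms by (simp_all add: r_def)
  have r_le: "r \<le> (3 * x) powr (real D / 2)"
    using m assms by (simp add: r_def powr_half_sqrt_powr powr_realpow)
  have "sqrt (1 + m * ln (4 * sqrt m + 1)) + 2 * sqrt m \<le> 4 * sqrt (real D) * x * r"
    using sqrt_entropy_le_linear[OF assms(1,2) \<open>1 \<le> r\<close> r_le] \<open>1 \<le> r\<close> by (simp add: \<open>m = r^2\<close>)
  also have "\<dots> \<le> 3 powr (5/2) * sqrt (real D) * x * (3 * x) powr (real D / 2)"
  proof (intro mult_mono)
    have "(4::real) \<le> 3 powr 2" by simp
    also have "\<dots> \<le> 3 powr (5/2)" by (intro powr_mono) auto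
    finally show "(4::real) \<le> 3 powr (5/2)" .
  qed (use r_le \<open>1 \<le> r\<close> assms in auto)
  also have "\<dots> = 3 powr ((5 + real D) / 2) * sqrt (real D) * x powr (1 + real D / 2)"
  proof -
    have "(3 * x) powr (real D / 2) = 3 powr (real D / 2) * x powr (real D / 2)"
      using assms by (simp add: powr_mult)
    moreover have "x powr (1 + real D / 2) = x * x powr (real D / 2)"
      using assms by (simp add: powr_add)
    moreover have "(3::real) powr ((5 + real D) / 2) = 3 powr (5/2) * 3 powr (real D / 2)"
      by (simp add: add_divide_distrib flip: powr_add)
    ultimately show ?thesis by (simp only: mult_ac)
  qed
  finally show ?thesis .
qed

theorem proposition1:
  fixes b :: "nat \<Rightarrow> real" and Q0 :: "(real ^ 'd) measure"
    and q0 M \<delta>0 \<eta>0 \<delta> :: real and V n :: nat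
  assumes b_pos: "\<forall>k. b k > 0"
    and R_pos: "Rad b > 0"
    and Q0: "valid_mixing b Q0"
    and A1_fin: "Rad b \<noteq> \<infinity> \<longrightarrow> 0 < q0 \<and> q0 < 1 \<and>
          msupp Q0 \<subseteq> {\<theta>. \<forall>j. 0 \<le> \<theta> $ j \<and> \<theta> $ j \<le> q0 * real_of_ereal (Rad b)}"
    and A1_inf: "Rad b = \<infinity> \<longrightarrow> 0 < M \<and> msupp Q0 \<subseteq> {\<theta>. \<forall>j. 0 \<le> \<theta> $ j \<and> \<theta> $ j \<le> M}"
    and A2_delta: "0 < \<delta>0" "ereal \<delta>0 < Rad b"
          "msupp Q0 \<inter> {\<theta>. \<exists>j. 0 < \<theta> $ j \<and> \<theta> $ j < \<delta>0} = {}"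
    and A2_eta: "0 < \<eta>0" "\<eta>0 \<le> 1"
          "measure Q0 {0} > 0 \<longrightarrow> \<eta>0 < 1 \<and> measure Q0 {0} \<le> 1 - \<eta>0"
    and A3: "\<forall>k\<ge>V. b k / b 0 \<ge> 1 / real k ^ k"
    and A4: "convergent (\<lambda>k. b (Suc k) / b k)"
    and n_large: "n \<ge> Nc b CARD('d) (t0c b q0) (thetac b q0 M) \<delta>0 \<eta>0 V"
    and delta_pos: "\<delta> > 0"
  shows "JB (Pmeas (mixpmf b Q0)) (Gn b (mixpmf b Q0) n \<delta>) \<delta>
     \<le> ennreal (3 powr ((5 + real CARD('d)) / 2) * sqrt (real CARD('d))
          * ln (real (n * CARD('d))) powr (1 + real CARD('d) / 2) * \<delta>
          / ln (1 / t0c b q0) powr (1 + real CARD('d) / 2))"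
proof -
  define p0 S x where "p0 = mixpmf b Q0" and "S = {k::nat^'d. maxk k \<le> Kn p0 n}"
    and "x = ln (real (n * CARD('d))) / ln (1 / t0c b q0)"
  have x: "3 \<le> x" "real (Kn p0 n + 1) \<le> 3 * x"
    using Kn_mixpmf_le[OF b_pos R_pos Q0 A1_fin A1_inf A4 n_large] by (simp_all add: x_def p0_def)
  have "0 \<in> S" by (simp add: S_def maxk_le_iff)
  have "real (card S) = real (Kn p0 n + 1) ^ CARD('d)" by (simp add: S_def card_maxk_le)
  then have m: "1 \<le> real (card S)" "real (card S) \<le> (3 * x) ^ CARD('d)"
    using x power_mono[OF x(2), of "CARD('d)"] by auto
  have "JB (Pmeas p0) (Gn b p0 n \<delta>) \<delta>
      \<le> ennreal ((sqrt (1 + card S * ln (4 * sqrt (card S) + 1)) + 2 * sqrt (card S)) * \<delta>)"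
    using Gn_envelope[OF b_pos Q0] \<open>0 \<in> S\<close> delta_pos
    by (intro JB_le_of_envelope) (auto simp: S_def p0_def finite_maxk_le not_less mixpmf_nonneg[OF b_pos Q0])
  also have "\<dots> \<le> ennreal (3 powr ((5 + real CARD('d)) / 2) * sqrt (real CARD('d))
      * x powr (1 + real CARD('d) / 2) * \<delta>)"
    using x delta_pos m by (intro ennreal_leI mult_right_mono entropy_constant_le) auto
  finally show ?thesis
    by (simp add: x_def p0_def powr_divide)
qed

end
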